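(* Let $F$ be the free group on the totally ordered set $X=\{x_1<\dots<x_m\}$, and let $n\ge1$, $c\ge1$ with $c\ge n-1$. Let $$W=\{[b,a]:\ b,a \text{ basic commutators on } X,\ b>a,\ wt(b)\ge c+n+1,\ wt(a)\ge c+1,\ wt(b)+wt(a)\le 2c+2n+1\}.$$ Then $$[\gamma_{c+n+1}(F),\gamma_{c+1}(F)]\,\gamma_{2c+2n+2}(F)=\langle W\rangle\,\gamma_{2c+2n+2}(F),$$ i.e. $[\gamma_{c+n+1}(F),\gamma_{c+1}(F)]\equiv\langle W\rangle \pmod{\gamma_{2c+2n+2}(F)}$.
   Context: $\gamma_k(F)$ is the $k$-th term of the lower central series of $F$. Basic commutators on a totally ordered set $X$ of free generators are defined inductively with their weights $wt$: the elements of $X$ are the basic commutators of weight 1, ordered as in $X$. Assuming basic commutators of weight $<k$ have been defined and ordered, a commutator $[b,a]$ is a basic commutator of weight $k$ if $b,a$ are basic commutators with $wt(a)+wt(b)=k$, $b>a$, and, if $b=[b_1,b_2]$ (with $b_1,b_2$ basic), then $b_2\le a$. The ordering is then extended to weight $k$ so that all basic commutators of smaller weight precede those of weight $k$. *)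

theory Defs
  imports "HOL-Algebra.Algebra"
begin

definition gcomm :: "('g, 'b) monoid_scheme \<Rightarrow> 'g \<Rightarrow> 'g \<Rightarrow> 'g" where
  "gcomm G a b = inv\<^bsub>G\<^esub> a \<otimes>\<^bsub>G\<^esub> inv\<^bsub>G\<^esub> b \<otimes>\<^bsub>G\<^esub> a \<otimes>\<^bsub>G\<^esub> b"

definition comm_subgroup :: "('g, 'b) monoid_scheme \<Rightarrow> 'g set \<Rightarrow> 'g set \<Rightarrow> 'g set" where
  "comm_subgroup G H K = generate G {gcomm G h k | h k. h \<in> H \<and> k \<in> K}"

primrec lcs :: "('g, 'b) monoid_scheme \<Rightarrow> nat \<Rightarrow> 'g set" where
  "lcs G 0 = carrier G"
| "lcs G (Suc k) = comm_subgroup G (lcs G k) (carrier G)"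

text \<open>gamma G k is the k-th term of the lower central series (gamma G 1 = G), for k >= 1.\<close>
definition gamma :: "('g, 'b) monoid_scheme \<Rightarrow> nat \<Rightarrow> 'g set" where
  "gamma G k = lcs G (k - 1)"

text \<open>Free groups: G is freely generated by x 0, ..., x (m-1).
  Words are lists of (index, exponent sign); True = x_i, False = x_i^-1.\<close>
definition reduced_word :: "nat \<Rightarrow> (nat \<times> bool) list \<Rightarrow> bool" where
  "reduced_word m w \<longleftrightarrow> (\<forall>p \<in> set w. fst p < m) \<and>
     (\<forall>i. Suc i < length w \<longrightarrow> \<not> (fst (w ! i) = fst (w ! Suc i) \<and> snd (w ! i) \<noteq> snd (w ! Suc i)))"

fun word_eval :: "('g, 'b) monoid_scheme \<Rightarrow> (nat \<Rightarrow> 'g) \<Rightarrow> (nat \<times> bool) list \<Rightarrow> 'g" where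
  "word_eval G x [] = \<one>\<^bsub>G\<^esub>"
| "word_eval G x (p # w) =
     (if snd p then x (fst p) else inv\<^bsub>G\<^esub> (x (fst p))) \<otimes>\<^bsub>G\<^esub> word_eval G x w"

definition free_group_on :: "('g, 'b) monoid_scheme \<Rightarrow> (nat \<Rightarrow> 'g) \<Rightarrow> nat \<Rightarrow> bool" where
  "free_group_on G x m \<longleftrightarrow> group G \<and> x ` {..<m} \<subseteq> carrier G \<and>
     generate G (x ` {..<m}) = carrier G \<and>
     (\<forall>w. reduced_word m w \<and> w \<noteq> [] \<longrightarrow> word_eval G x w \<noteq> \<one>\<^bsub>G\<^esub>)"

datatype fcomm = Gen nat | Br fcomm fcomm

fun wt :: "fcomm \<Rightarrow> nat" where
  "wt (Gen i) = 1"
| "wt (Br b a) = wt b + wt a"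

fun fc_eval :: "('g, 'b) monoid_scheme \<Rightarrow> (nat \<Rightarrow> 'g) \<Rightarrow> fcomm \<Rightarrow> 'g" where
  "fc_eval G x (Gen i) = x i"
| "fc_eval G x (Br b a) = gcomm G (fc_eval G x b) (fc_eval G x a)"

definition admissible_order :: "nat \<Rightarrow> (fcomm \<Rightarrow> fcomm \<Rightarrow> bool) \<Rightarrow> bool" where
  "admissible_order m lt \<longleftrightarrow>
     (\<forall>a. \<not> lt a a) \<and> (\<forall>a b c. lt a b \<longrightarrow> lt b c \<longrightarrow> lt a c) \<and>
     (\<forall>a b. lt a b \<or> a = b \<or> lt b a) \<and>
     (\<forall>i j. i < m \<longrightarrow> j < m \<longrightarrow> (lt (Gen i) (Gen j) \<longleftrightarrow> i < j)) \<and>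
     (\<forall>a b. wt a < wt b \<longrightarrow> lt a b)"

inductive basic :: "nat \<Rightarrow> (fcomm \<Rightarrow> fcomm \<Rightarrow> bool) \<Rightarrow> fcomm \<Rightarrow> bool"
  for m lt where
  gen: "i < m \<Longrightarrow> basic m lt (Gen i)"
| br: "basic m lt b \<Longrightarrow> basic m lt a \<Longrightarrow> lt a b \<Longrightarrow>
       (\<forall>b1 b2. b = Br b1 b2 \<longrightarrow> (lt b2 a \<or> b2 = a)) \<Longrightarrow> basic m lt (Br b a)"

end

theory Submission
  imports Defs
begin

(* Write N = gamma(2k+2n+2) and C = [gamma(k+n+1), gamma(k+1)].  Both sides of the
   claim are products of a subgroup with the normal subgroup N, so it suffices to show that
   C and the group generated by the commutators in W generate the same subgroup together with N.
   Since W consists of commutators of elements of gamma(k+n+1) and gamma(k+1), one inclusion is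
   immediate; the content is that every generator [g,h] of C lies in R = <W> N.

   The hypothesis k >= n-1 ensures that all correction terms
       produced by the multiplicativity of (1) already lie in N.
   The free-group hypothesis is used only through the facts that F is a group generated by x. *)

section \<open>Commutator identities\<close>

context group begin

lemma cancel_l [simp]: "x \<in> carrier G \<Longrightarrow> y \<in> carrier G \<Longrightarrow> x \<otimes> (inv x \<otimes> y) = y"
  by (simp add: m_assoc[symmetric])

lemma cancel_l2 [simp]: "x \<in> carrier G \<Longrightarrow> y \<in> carrier G \<Longrightarrow> inv x \<otimes> (x \<otimes> y) = y"
  by (simp add: m_assoc[symmetric])

lemma gcomm_closed [simp]: "a \<in> carrier G \<Longrightarrow> b \<in> carrier G \<Longrightarrow> gcomm G a b \<in> carrier G"
  by (simp add: gcomm_def)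

lemma gcomm_inv: "a \<in> carrier G \<Longrightarrow> b \<in> carrier G \<Longrightarrow> inv (gcomm G a b) = gcomm G b a"
  by (simp add: gcomm_def m_assoc inv_mult_group)

lemma gcomm_self: "a \<in> carrier G \<Longrightarrow> gcomm G a a = \<one>"
  by (simp add: gcomm_def m_assoc)

lemma gcomm_one_l: "a \<in> carrier G \<Longrightarrow> gcomm G \<one> a = \<one>"
  by (simp add: gcomm_def m_assoc)

lemma gcomm_one_r: "a \<in> carrier G \<Longrightarrow> gcomm G a \<one> = \<one>"
  by (simp add: gcomm_def m_assoc)

lemma gcomm_mult_l: "a \<in> carrier G \<Longrightarrow> b \<in> carrier G \<Longrightarrow> c \<in> carrier G \<Longrightarrow>
  gcomm G (a \<otimes> b) c = (inv b \<otimes> gcomm G a c \<otimes> b) \<otimes> gcomm G b c"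
  by (simp add: gcomm_def m_assoc inv_mult_group)

lemma gcomm_mult_r: "a \<in> carrier G \<Longrightarrow> b \<in> carrier G \<Longrightarrow> c \<in> carrier G \<Longrightarrow>
  gcomm G a (b \<otimes> c) = gcomm G a c \<otimes> (inv c \<otimes> gcomm G a b \<otimes> c)"
  by (simp add: gcomm_def m_assoc inv_mult_group)

lemma gcomm_inv_l: "a \<in> carrier G \<Longrightarrow> c \<in> carrier G \<Longrightarrow>
  gcomm G (inv a) c = a \<otimes> inv (gcomm G a c) \<otimes> inv a"
  by (simp add: gcomm_def m_assoc inv_mult_group)

lemma gcomm_inv_r: "a \<in> carrier G \<Longrightarrow> c \<in> carrier G \<Longrightarrow>
  gcomm G a (inv c) = c \<otimes> inv (gcomm G a c) \<otimes> inv c"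
  by (simp add: gcomm_def m_assoc inv_mult_group)

lemma conj_eq: "u \<in> carrier G \<Longrightarrow> g \<in> carrier G \<Longrightarrow> inv g \<otimes> u \<otimes> g = u \<otimes> gcomm G u g"
  by (simp add: gcomm_def m_assoc)

lemma gcomm_conj: "a \<in> carrier G \<Longrightarrow> b \<in> carrier G \<Longrightarrow> g \<in> carrier G \<Longrightarrow>
  g \<otimes> gcomm G a b \<otimes> inv g = gcomm G (g \<otimes> a \<otimes> inv g) (g \<otimes> b \<otimes> inv g)"
  by (simp add: gcomm_def m_assoc inv_mult_group)

lemma hall_witt: "x \<in> carrier G \<Longrightarrow> y \<in> carrier G \<Longrightarrow> z \<in> carrier G \<Longrightarrow>
  gcomm G (gcomm G x y) (inv x \<otimes> z \<otimes> x) \<otimes> gcomm G (gcomm G z x) (inv z \<otimes> y \<otimes> z)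
   \<otimes> gcomm G (gcomm G y z) (inv y \<otimes> x \<otimes> y) = \<one>"
  by (simp add: gcomm_def m_assoc inv_mult_group)

lemma gcomm_conj_arg:
  assumes "e \<in> carrier G" "z \<in> carrier G" "w \<in> carrier G"
  shows "gcomm G e (inv w \<otimes> z \<otimes> w)
       = gcomm G e (gcomm G z w) \<otimes> (inv (gcomm G z w) \<otimes> gcomm G e z \<otimes> gcomm G z w)"
proof -
  have "inv w \<otimes> z \<otimes> w = z \<otimes> gcomm G z w" using conj_eq assms by simp
  then show ?thesis using gcomm_mult_r assms by simp
qed


section \<open>Commutator subgroups and the lower central series\<close>

lemma comm_gens_sub:
  "H \<subseteq> carrier G \<Longrightarrow> K \<subseteq> carrier G \<Longrightarrow> {gcomm G h k |h k. h \<in> H \<and> k \<in> K} \<subseteq> carrier G"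
  using gcomm_closed by blast

lemma comm_subgroup_subgroup:
  "H \<subseteq> carrier G \<Longrightarrow> K \<subseteq> carrier G \<Longrightarrow> subgroup (comm_subgroup G H K) G"
  unfolding comm_subgroup_def by (rule generate_is_subgroup[OF comm_gens_sub])

lemma comm_subgroup_incl: "h \<in> H \<Longrightarrow> k \<in> K \<Longrightarrow> gcomm G h k \<in> comm_subgroup G H K"
  unfolding comm_subgroup_def by (rule generate.incl) auto

lemma lcs_sub: "lcs G k \<subseteq> carrier G"
proof (induction k)
  case (Suc k)
  then show ?case
    using subgroup.subset[OF comm_subgroup_subgroup[of "lcs G k" "carrier G"]] by simp
qed simp

lemma lcs_carrier: "x \<in> lcs G k \<Longrightarrow> x \<in> carrier G"
  using lcs_sub by blast

text \<open>Every term of the lower central series is normal, since conjugation maps the generating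
  commutators [h,g] to commutators of the same kind.\<close>

lemma lcs_normal: "lcs G k \<lhd> G"
proof (induction k)
  case 0 then show ?case by (simp add: normal_self)
next
  case (Suc k)
  let ?gens = "{gcomm G h k' |h k'. h \<in> lcs G k \<and> k' \<in> carrier G}"
  show ?case unfolding lcs.simps comm_subgroup_def
  proof (rule normal_generateI[OF comm_gens_sub[OF lcs_sub order_refl]])
    fix h g assume h: "h \<in> ?gens" and g: "g \<in> carrier G"
    from h obtain a b where ab: "h = gcomm G a b" "a \<in> lcs G k" "b \<in> carrier G" by auto
    have "g \<otimes> h \<otimes> inv g = gcomm G (g \<otimes> a \<otimes> inv g) (g \<otimes> b \<otimes> inv g)"
      unfolding ab(1) by (rule gcomm_conj[OF lcs_carrier[OF ab(2)] ab(3) g])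
    moreover have "g \<otimes> a \<otimes> inv g \<in> lcs G k" by (rule normal.inv_op_closed2[OF Suc.IH g ab(2)])
    moreover have "g \<otimes> b \<otimes> inv g \<in> carrier G" using ab g by simp
    ultimately show "g \<otimes> h \<otimes> inv g \<in> ?gens" by auto
  qed
qed

lemma lcs_subgroup: "subgroup (lcs G k) G"
  using lcs_normal normal_imp_subgroup by blast

lemma lcs_inv: "x \<in> lcs G i \<Longrightarrow> inv x \<in> lcs G i"
  by (rule subgroup.m_inv_closed[OF lcs_subgroup])

lemma lcs_mult: "x \<in> lcs G i \<Longrightarrow> y \<in> lcs G i \<Longrightarrow> x \<otimes> y \<in> lcs G i"
  by (rule subgroup.m_closed[OF lcs_subgroup])

lemma gcomm_lcs_Suc: "h \<in> lcs G k \<Longrightarrow> g \<in> carrier G \<Longrightarrow> gcomm G h g \<in> lcs G (Suc k)"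
  by (simp add: comm_subgroup_incl)

lemma gcomm_lcs_Suc': "h \<in> lcs G k \<Longrightarrow> g \<in> carrier G \<Longrightarrow> gcomm G g h \<in> lcs G (Suc k)"
  using lcs_inv[OF gcomm_lcs_Suc] gcomm_inv lcs_carrier by metis

lemma lcs_Suc_sub: "lcs G (Suc k) \<subseteq> lcs G k"
  unfolding lcs.simps comm_subgroup_def
proof (rule generate_subgroup_incl[OF _ lcs_subgroup], safe)
  fix h g assume h: "h \<in> lcs G k" and g: "g \<in> carrier G"
  have hc: "h \<in> carrier G" using lcs_carrier[OF h] .
  have "gcomm G h g = inv h \<otimes> (inv g \<otimes> h \<otimes> g)" using hc g by (simp add: gcomm_def m_assoc)
  moreover have "inv g \<otimes> h \<otimes> g \<in> lcs G k" by (rule normal.inv_op_closed1[OF lcs_normal g h])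
  ultimately show "gcomm G h g \<in> lcs G k" using lcs_mult[OF lcs_inv[OF h]] by simp
qed

lemma lcs_anti: "i \<le> j \<Longrightarrow> lcs G j \<subseteq> lcs G i"
  by (induction j rule: dec_induct) (use lcs_Suc_sub in blast)+

text \<open>For a normal subgroup N, the elements y with [x,y] in N for all x in a set form a
  subgroup; this lets commutator conditions pass from generators to generated subgroups.\<close>

lemma comm_right_subgroup:
  assumes N: "N \<lhd> G" and Y: "Y \<subseteq> carrier G"
  shows "subgroup {y \<in> carrier G. \<forall>x\<in>Y. gcomm G x y \<in> N} G"
proof -
  let ?A = "{y \<in> carrier G. \<forall>x\<in>Y. gcomm G x y \<in> N}"
  have Nsg: "subgroup N G" by (rule normal_imp_subgroup[OF N])
  show ?thesis
  proof (rule subgroup.intro)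
    show "?A \<subseteq> carrier G" by blast
  next
    fix b c assume b: "b \<in> ?A" and c: "c \<in> ?A"
    show "b \<otimes> c \<in> ?A"
    proof (safe)
      show "b \<otimes> c \<in> carrier G" using b c by simp
      fix x assume x: "x \<in> Y"
      have xc: "x \<in> carrier G" using x Y by blast
      have "inv c \<otimes> gcomm G x b \<otimes> c \<in> N" using normal.inv_op_closed1[OF N] b c x by blast
      moreover have "gcomm G x c \<in> N" using c x by blast
      ultimately have "gcomm G x c \<otimes> (inv c \<otimes> gcomm G x b \<otimes> c) \<in> N"
        using subgroup.m_closed[OF Nsg] by blast
      then show "gcomm G x (b \<otimes> c) \<in> N" using gcomm_mult_r[OF xc] b c by simp
    qed
  next
    show "\<one> \<in> ?A" using Y gcomm_one_r subgroup.one_closed[OF Nsg] by auto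
  next
    fix c assume c: "c \<in> ?A"
    show "inv c \<in> ?A"
    proof safe
      show "inv c \<in> carrier G" using c by simp
      fix x assume x: "x \<in> Y"
      have xc: "x \<in> carrier G" using x Y by blast
      have "inv (gcomm G x c) \<in> N" using c x subgroup.m_inv_closed[OF Nsg] by blast
      then have "c \<otimes> inv (gcomm G x c) \<otimes> inv c \<in> N" using normal.inv_op_closed2[OF N] c by blast
      then show "gcomm G x (inv c) \<in> N" using gcomm_inv_r[OF xc] c by simp
    qed
  qed
qed

text \<open>The fundamental inclusion [gamma_(i+1), gamma_(j+1)] \<subseteq> gamma_(i+j+2), by induction on j
  and the Hall-Witt identity (three subgroup lemma).\<close>

lemma comm_lcs: "x \<in> lcs G i \<Longrightarrow> y \<in> lcs G j \<Longrightarrow> gcomm G x y \<in> lcs G (i + j + 1)"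
proof (induction j arbitrary: i x y)
  case 0 then show ?case using gcomm_lcs_Suc lcs_carrier by simp
next
  case (Suc j)
  let ?N = "lcs G (i + Suc j + 1)"
  have "lcs G (Suc j) \<subseteq> {y \<in> carrier G. \<forall>x\<in>lcs G i. gcomm G x y \<in> ?N}"
    unfolding lcs.simps comm_subgroup_def
  proof (rule generate_subgroup_incl[OF _ comm_right_subgroup[OF lcs_normal lcs_sub]], safe)
    fix u g assume u: "u \<in> lcs G j" and g: "g \<in> carrier G"
    have uc: "u \<in> carrier G" using lcs_carrier[OF u] .
    show "gcomm G u g \<in> carrier G" using uc g by simp
    fix x assume x: "x \<in> lcs G i"
    have xc: "x \<in> carrier G" using lcs_carrier[OF x] .
    define c where "c = u \<otimes> x \<otimes> inv u"
    have cc: "c \<in> carrier G" using c_def uc xc by simp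
    have c: "c \<in> lcs G i" using normal.inv_op_closed2[OF lcs_normal uc x] c_def by simp
    have xe: "inv u \<otimes> c \<otimes> u = x" using uc xc by (simp add: c_def m_assoc)
    let ?A = "gcomm G (gcomm G u g) x"
    let ?B = "gcomm G (gcomm G c u) (inv c \<otimes> g \<otimes> c)"
    let ?C = "gcomm G (gcomm G g c) (inv g \<otimes> u \<otimes> g)"
    have hw: "?A \<otimes> ?B \<otimes> ?C = \<one>"
      using hall_witt[OF uc g cc] unfolding xe .
    have "gcomm G c u \<in> lcs G (i + j + 1)" by (rule Suc.IH[OF c u])
    then have B: "?B \<in> ?N" using gcomm_lcs_Suc[of _ "i + j + 1"] cc g by simp
    have "?C \<in> lcs G (Suc i + j + 1)"
      by (rule Suc.IH[OF gcomm_lcs_Suc'[OF c g] normal.inv_op_closed1[OF lcs_normal g u]])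
    then have C: "?C \<in> ?N" by simp
    have Ac: "?A \<in> carrier G" "?B \<in> carrier G" "?C \<in> carrier G" using uc g xc cc by simp_all
    have "?A = inv (?B \<otimes> ?C)" using hw Ac by (simp add: m_assoc inv_equality)
    then have "?A \<in> ?N" using lcs_inv[OF lcs_mult[OF B C]] by simp
    then have "inv ?A \<in> ?N" by (rule lcs_inv)
    then show "gcomm G x (gcomm G u g) \<in> ?N" using gcomm_inv xc uc g by simp
  qed
  then show ?case using Suc.prems by blast
qed

lemma comm_lcs_le: "x \<in> lcs G i \<Longrightarrow> y \<in> lcs G j \<Longrightarrow> l \<le> i + j + 1 \<Longrightarrow> gcomm G x y \<in> lcs G l"
  using comm_lcs lcs_anti by blast

end

section \<open>Congruences modulo a normal subgroup\<close>

definition cong_mod :: "('g, 'b) monoid_scheme \<Rightarrow> 'g set \<Rightarrow> 'g \<Rightarrow> 'g \<Rightarrow> bool" where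
  "cong_mod G N a b \<longleftrightarrow> a \<in> carrier G \<and> b \<in> carrier G \<and> a \<otimes>\<^bsub>G\<^esub> inv\<^bsub>G\<^esub> b \<in> N"

context group begin

lemma cong_mod_sym: assumes N: "N \<lhd> G" and ab: "cong_mod G N a b" shows "cong_mod G N b a"
proof -
  have c: "a \<in> carrier G" "b \<in> carrier G" "a \<otimes> inv b \<in> N" using ab by (auto simp: cong_mod_def)
  have "inv (a \<otimes> inv b) \<in> N" by (rule subgroup.m_inv_closed[OF normal_imp_subgroup[OF N] c(3)])
  then show ?thesis using c by (simp add: cong_mod_def inv_mult_group)
qed

lemma cong_mod_trans:
  assumes N: "N \<lhd> G" and ab: "cong_mod G N a b" and bc: "cong_mod G N b c" shows "cong_mod G N a c"
proof -
  have c1: "a \<in> carrier G" "b \<in> carrier G" "a \<otimes> inv b \<in> N" using ab by (auto simp: cong_mod_def)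
  have c2: "c \<in> carrier G" "b \<otimes> inv c \<in> N" using bc by (auto simp: cong_mod_def)
  have "(a \<otimes> inv b) \<otimes> (b \<otimes> inv c) \<in> N"
    by (rule subgroup.m_closed[OF normal_imp_subgroup[OF N] c1(3) c2(2)])
  then show ?thesis using c1 c2 by (simp add: cong_mod_def m_assoc)
qed

lemma cong_mod_mult:
  assumes N: "N \<lhd> G" and ab: "cong_mod G N a a'" and bb: "cong_mod G N b b'"
  shows "cong_mod G N (a \<otimes> b) (a' \<otimes> b')"
proof -
  have c: "a \<in> carrier G" "a' \<in> carrier G" "b \<in> carrier G" "b' \<in> carrier G"
      "a \<otimes> inv a' \<in> N" "b \<otimes> inv b' \<in> N"
    using ab bb by (auto simp: cong_mod_def)
  have "a \<otimes> (b \<otimes> inv b') \<otimes> inv a \<in> N" by (rule normal.inv_op_closed2[OF N c(1) c(6)])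
  then have "(a \<otimes> (b \<otimes> inv b') \<otimes> inv a) \<otimes> (a \<otimes> inv a') \<in> N"
    using subgroup.m_closed[OF normal_imp_subgroup[OF N] _ c(5)] by blast
  then show ?thesis using c by (simp add: cong_mod_def m_assoc inv_mult_group)
qed

lemma cong_mod_one: assumes "N \<lhd> G" "n \<in> N" shows "cong_mod G N n \<one>"
  using assms subgroup.mem_carrier[OF normal_imp_subgroup[OF assms(1)] assms(2)]
  by (simp add: cong_mod_def)

lemma cong_mod_mem: assumes "subgroup V G" "N \<subseteq> V" "cong_mod G N a b" "b \<in> V" shows "a \<in> V"
proof -
  have c: "a \<in> carrier G" "b \<in> carrier G" "a \<otimes> inv b \<in> V" using assms(2,3) by (auto simp: cong_mod_def)
  then have "(a \<otimes> inv b) \<otimes> b \<in> V" using assms(4) subgroup.m_closed[OF assms(1)] by blast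
  then show ?thesis using c by (simp add: m_assoc)
qed

lemma cong_mod_conj: assumes N: "N \<lhd> G" and c: "e \<in> carrier G" "t \<in> carrier G"
    and h: "gcomm G e t \<in> N"
  shows "cong_mod G N (inv t \<otimes> e \<otimes> t) e"
proof -
  have "e \<otimes> gcomm G e t \<otimes> inv e \<in> N" by (rule normal.inv_op_closed2[OF N c(1) h])
  then show ?thesis using c conj_eq[OF c] by (simp add: cong_mod_def m_assoc)
qed

lemma cong_mod_conj_inv: "N \<lhd> G \<Longrightarrow> e \<in> carrier G \<Longrightarrow> t \<in> carrier G \<Longrightarrow> gcomm G e (inv t) \<in> N
    \<Longrightarrow> cong_mod G N (t \<otimes> e \<otimes> inv t) e"
  using cong_mod_conj[of N e "inv t"] by simp

lemma cong_mod_gcomm_conj_arg: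
  assumes N: "N \<lhd> G" and c: "e \<in> carrier G" "z \<in> carrier G" "w \<in> carrier G"
    and h1: "gcomm G e (gcomm G z w) \<in> N" and h2: "gcomm G (gcomm G e z) (gcomm G z w) \<in> N"
  shows "cong_mod G N (gcomm G e (inv w \<otimes> z \<otimes> w)) (gcomm G e z)"
proof -
  have "cong_mod G N (gcomm G e (gcomm G z w) \<otimes> (inv (gcomm G z w) \<otimes> gcomm G e z \<otimes> gcomm G z w))
                    (\<one> \<otimes> gcomm G e z)"
    using cong_mod_mult[OF N cong_mod_one[OF N h1] cong_mod_conj[OF N _ _ h2]] c by simp
  then show ?thesis using gcomm_conj_arg c by simp
qed


section \<open>Commutator calculus modulo high terms of the lower central series\<close>

text \<open>Jacobi identity: for x, y, z in gamma_(p+1), gamma_(q+1), gamma_(r+1), the commutator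
  [[x,y],z] is congruent modulo gamma_(p+q+r+4) to [[x,z],y] [[y,z],x]^-1, by Hall-Witt.\<close>

lemma jacobi:
  assumes x: "x \<in> lcs G p" and y: "y \<in> lcs G q" and z: "z \<in> lcs G r"
    and V: "subgroup V G" "lcs G (p + q + r + 3) \<subseteq> V"
    and A: "gcomm G (gcomm G x z) y \<in> V" and B: "gcomm G (gcomm G y z) x \<in> V"
  shows "gcomm G (gcomm G x y) z \<in> V"
proof -
  let ?N = "lcs G (p + q + r + 3)"
  have N: "?N \<lhd> G" by (rule lcs_normal)
  have xc: "x \<in> carrier G" and yc: "y \<in> carrier G" and zc: "z \<in> carrier G"
    using x y z lcs_carrier by auto
  let ?E1 = "gcomm G (gcomm G x y) z" and ?E2 = "gcomm G (gcomm G z x) y"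
    and ?E3 = "gcomm G (gcomm G y z) x" and ?A = "gcomm G (gcomm G x z) y"
  have m1: "cong_mod G ?N (gcomm G (gcomm G x y) (inv x \<otimes> z \<otimes> x)) ?E1"
    by (rule cong_mod_gcomm_conj_arg[OF N])
       (use xc yc zc in simp, use xc yc zc in simp, use xc yc zc in simp,
        (rule comm_lcs_le[OF comm_lcs[OF x y] comm_lcs[OF z x]]; simp),
        (rule comm_lcs_le[OF comm_lcs[OF comm_lcs[OF x y] z] comm_lcs[OF z x]]; simp))
  have m2: "cong_mod G ?N (gcomm G (gcomm G z x) (inv z \<otimes> y \<otimes> z)) ?E2"
    by (rule cong_mod_gcomm_conj_arg[OF N])
       (use xc yc zc in simp, use xc yc zc in simp, use xc yc zc in simp,
        (rule comm_lcs_le[OF comm_lcs[OF z x] comm_lcs[OF y z]]; simp),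
        (rule comm_lcs_le[OF comm_lcs[OF comm_lcs[OF z x] y] comm_lcs[OF y z]]; simp))
  have m3: "cong_mod G ?N (gcomm G (gcomm G y z) (inv y \<otimes> x \<otimes> y)) ?E3"
    by (rule cong_mod_gcomm_conj_arg[OF N])
       (use xc yc zc in simp, use xc yc zc in simp, use xc yc zc in simp,
        (rule comm_lcs_le[OF comm_lcs[OF y z] comm_lcs[OF x y]]; simp),
        (rule comm_lcs_le[OF comm_lcs[OF comm_lcs[OF y z] x] comm_lcs[OF x y]]; simp))
  have e2: "?E2 = gcomm G x z \<otimes> inv ?A \<otimes> inv (gcomm G x z)"
    using gcomm_inv_l[of "gcomm G x z" y] gcomm_inv[of x z] xc yc zc by simp
  have m4: "cong_mod G ?N ?E2 (inv ?A)"
    unfolding e2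
  proof (rule cong_mod_conj_inv[OF N])
    show "inv ?A \<in> carrier G" "gcomm G x z \<in> carrier G" using xc yc zc by simp_all
    show "gcomm G (inv ?A) (inv (gcomm G x z)) \<in> ?N"
      by (rule comm_lcs_le[OF lcs_inv[OF comm_lcs[OF comm_lcs[OF x z] y]] lcs_inv[OF comm_lcs[OF x z]]])
         simp
  qed
  have "cong_mod G ?N \<one> (?E1 \<otimes> inv ?A \<otimes> ?E3)"
    using cong_mod_mult[OF N cong_mod_mult[OF N m1 cong_mod_trans[OF N m2 m4]] m3]
      hall_witt[OF xc yc zc] by simp
  then have P: "?E1 \<otimes> inv ?A \<otimes> ?E3 \<in> V"
    using cong_mod_mem[OF V(1) V(2) cong_mod_sym[OF N]] subgroup.one_closed[OF V(1)] by blast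
  have c: "?E1 \<in> carrier G" "?A \<in> carrier G" "?E3 \<in> carrier G" using xc yc zc by simp_all
  have "(?E1 \<otimes> inv ?A \<otimes> ?E3) \<otimes> inv ?E3 \<otimes> ?A \<in> V"
    using P A B V(1) subgroup.m_closed subgroup.m_inv_closed by metis
  then show ?thesis using c by (simp add: m_assoc)
qed

text \<open>Commutation with a fixed z in gamma_(r+1) is multiplicative modulo gamma_(2s+r+3) on
  gamma_(s+1): if [e,z] lies in V for all generators e of a subgroup of gamma_(s+1), then
  [g,z] lies in V for every element g of that subgroup.\<close>

lemma gcomm_generate_left:
  assumes z: "z \<in> lcs G r" and V: "subgroup V G" "lcs G (2*s+r+2) \<subseteq> V"
    and S: "S \<subseteq> lcs G s" and h: "\<forall>e\<in>S. gcomm G e z \<in> V"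
    and g: "g \<in> generate G S"
  shows "gcomm G g z \<in> V"
proof -
  let ?N = "lcs G (2*s+r+2)"
  have N: "?N \<lhd> G" by (rule lcs_normal)
  have zc: "z \<in> carrier G" using lcs_carrier[OF z] .
  let ?A = "{g \<in> lcs G s. gcomm G g z \<in> V}"
  have "subgroup ?A G"
  proof (rule subgroup.intro)
    show "?A \<subseteq> carrier G" using lcs_carrier by blast
  next
    fix a b assume a: "a \<in> ?A" and b: "b \<in> ?A"
    have al: "a \<in> lcs G s" and bl: "b \<in> lcs G s" and aV: "gcomm G a z \<in> V"
      and bV: "gcomm G b z \<in> V" using a b by auto
    have ac: "a \<in> carrier G" and bc: "b \<in> carrier G" using al bl lcs_carrier by auto
    have "gcomm G (gcomm G a z) b \<in> ?N"
      by (rule comm_lcs_le[OF comm_lcs[OF al z] bl]) simp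
    then have "cong_mod G ?N (inv b \<otimes> gcomm G a z \<otimes> b) (gcomm G a z)"
      by (rule cong_mod_conj[OF N gcomm_closed[OF ac zc] bc])
    then have "inv b \<otimes> gcomm G a z \<otimes> b \<in> V" using cong_mod_mem[OF V] aV by blast
    then have "(inv b \<otimes> gcomm G a z \<otimes> b) \<otimes> gcomm G b z \<in> V"
      using bV subgroup.m_closed[OF V(1)] by blast
    then have "gcomm G (a \<otimes> b) z \<in> V" by (simp only: gcomm_mult_l[OF ac bc zc])
    then show "a \<otimes> b \<in> ?A" using lcs_mult[OF al bl] by blast
  next
    have "gcomm G \<one> z \<in> V" using gcomm_one_l[OF zc] subgroup.one_closed[OF V(1)] by simp
    then show "\<one> \<in> ?A" using subgroup.one_closed[OF lcs_subgroup] by blast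
  next
    fix a assume a: "a \<in> ?A"
    have al: "a \<in> lcs G s" and aV: "gcomm G a z \<in> V" using a by auto
    have ac: "a \<in> carrier G" using lcs_carrier[OF al] .
    have "gcomm G (inv (gcomm G a z)) (inv a) \<in> ?N"
      by (rule comm_lcs_le[OF lcs_inv[OF comm_lcs[OF al z]] lcs_inv[OF al]]) simp
    then have "cong_mod G ?N (a \<otimes> inv (gcomm G a z) \<otimes> inv a) (inv (gcomm G a z))"
      by (rule cong_mod_conj_inv[OF N inv_closed[OF gcomm_closed[OF ac zc]] ac])
    moreover have "inv (gcomm G a z) \<in> V" using aV subgroup.m_inv_closed[OF V(1)] by blast
    ultimately have "a \<otimes> inv (gcomm G a z) \<otimes> inv a \<in> V" using cong_mod_mem[OF V] by blast
    then have "gcomm G (inv a) z \<in> V" by (simp only: gcomm_inv_l[OF ac zc])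
    then show "inv a \<in> ?A" using lcs_inv[OF al] by blast
  qed
  moreover have "S \<subseteq> ?A" using S h by blast
  ultimately show ?thesis using generate_subgroup_incl g by blast
qed

lemma gcomm_generate_right:
  assumes e: "e \<in> lcs G s" and V: "subgroup V G" "lcs G (s+2*r+2) \<subseteq> V"
    and S: "S \<subseteq> lcs G r" and h: "\<forall>t\<in>S. gcomm G e t \<in> V"
    and g: "g \<in> generate G S"
  shows "gcomm G e g \<in> V"
proof -
  have ec: "e \<in> carrier G" using lcs_carrier[OF e] .
  have Sc: "S \<subseteq> carrier G" using S lcs_sub by blast
  have h': "\<forall>t\<in>S. gcomm G t e \<in> V"
    using h subgroup.m_inv_closed[OF V(1)] gcomm_inv ec Sc by (metis subsetD)
  have V': "lcs G (2*r+s+2) \<subseteq> V" using V(2) by (simp add: add.commute add.left_commute)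
  have gc: "g \<in> carrier G" using generate_in_carrier[OF Sc g] .
  have "gcomm G g e \<in> V" by (rule gcomm_generate_left[OF e V(1) V' S h' g])
  then show ?thesis using subgroup.m_inv_closed[OF V(1)] gcomm_inv[OF gc ec] by metis
qed

lemma set_mult_normal_generate:
  assumes H: "subgroup H G" and N: "N \<lhd> G"
  shows "H <#> N = generate G (H \<union> N)"
proof
  have Nsg: "subgroup N G" by (rule normal_imp_subgroup[OF N])
  show "H <#> N \<subseteq> generate G (H \<union> N)"
  proof
    fix y assume "y \<in> H <#> N"
    then obtain h n where hn: "h \<in> H" "n \<in> N" "y = h \<otimes> n" unfolding set_mult_def by blast
    have "h \<in> generate G (H \<union> N)" "n \<in> generate G (H \<union> N)"
      using hn(1,2) generate.incl[of _ "H \<union> N" G] by blast+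
    then show "y \<in> generate G (H \<union> N)" unfolding hn(3) by (rule generate.eng)
  qed
  have "H \<union> N \<subseteq> H <#> N"
  proof
    fix y assume "y \<in> H \<union> N"
    then have "y \<otimes> \<one> \<in> H <#> N \<or> \<one> \<otimes> y \<in> H <#> N"
      unfolding set_mult_def using subgroup.one_closed[OF H] subgroup.one_closed[OF Nsg] by blast
    then show "y \<in> H <#> N"
      using \<open>y \<in> H \<union> N\<close> subgroup.mem_carrier[OF H] subgroup.mem_carrier[OF Nsg] by auto
  qed
  then show "generate G (H \<union> N) \<subseteq> H <#> N"
    using generate_subgroup_incl[OF _ mult_norm_subgroup[OF N H]] commut_normal[OF H N] by simp
qed

lemma set_mult_normal_eq_generate:
  assumes H: "subgroup H G" and N: "N \<lhd> G"
    and A: "A \<subseteq> H" "H \<subseteq> generate G (A \<union> N)"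
  shows "H <#> N = generate G (A \<union> N)"
proof -
  have AN: "A \<union> N \<subseteq> carrier G"
    using A(1) subgroup.subset[OF H] subgroup.subset[OF normal_imp_subgroup[OF N]] by blast
  have "generate G (A \<union> N) \<subseteq> generate G (H \<union> N)" using A(1) by (intro mono_generate) blast
  moreover have "H \<union> N \<subseteq> generate G (A \<union> N)" using A(2) generate.incl[of _ "A \<union> N" G] by blast
  then have "generate G (H \<union> N) \<subseteq> generate G (A \<union> N)"
    by (rule generate_subgroup_incl[OF _ generate_is_subgroup[OF AN]])
  ultimately show ?thesis using set_mult_normal_generate[OF H N] by blast
qed

end

section \<open>Basic commutators and P. Hall's collection process\<close>

text \<open>From here on terms lcs G (Suc j) are kept folded: they only occur as members of the
  series, never to be expanded into commutator subgroups by the simplifier.\<close>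

declare lcs.simps(2)[simp del]

lemma wt_pos: "wt c \<ge> 1"
  by (induction c) auto

text \<open>There are only finitely many basic commutators of bounded weight; this makes the
  downward induction along the ordering in the collection process well-founded.\<close>

lemma basic_finite: "finite {c. basic m lt c \<and> wt c \<le> w}"
proof (induction w)
  case 0
  have "wt c \<noteq> 0" for c using wt_pos[of c] by simp
  then have "{c. basic m lt c \<and> wt c \<le> 0} = {}" by auto
  then show ?case by (simp only: finite.emptyI)
next
  case (Suc w)
  let ?T = "{c. basic m lt c \<and> wt c \<le> w}"
  have "{c. basic m lt c \<and> wt c \<le> Suc w} \<subseteq> Gen ` {..<m} \<union> (\<lambda>(b,a). Br b a) ` (?T \<times> ?T)"
  proof
    fix c assume "c \<in> {c. basic m lt c \<and> wt c \<le> Suc w}"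
    then have c: "basic m lt c" "wt c \<le> Suc w" by auto
    from c(1) show "c \<in> Gen ` {..<m} \<union> (\<lambda>(b,a). Br b a) ` (?T \<times> ?T)"
    proof cases
      case (gen i) then show ?thesis by auto
    next
      case (br b a)
      have "wt b \<le> w" "wt a \<le> w" using c(2) br(1) wt_pos[of a] wt_pos[of b] by auto
      then have "(b, a) \<in> ?T \<times> ?T" using br by auto
      then show ?thesis using br(1) by force
    qed
  qed
  moreover have "finite (Gen ` {..<m} \<union> (\<lambda>(b,a). Br b a) ` (?T \<times> ?T))" using Suc by simp
  ultimately show ?case by (rule finite_subset)
qed

inductive_cases basic_BrE: "basic m lt (Br b a)"

lemma finite_down_induct:
  assumes fin: "finite T" and irrefl: "\<And>a. \<not> lt a a" and trans: "\<And>a b c. lt a b \<Longrightarrow> lt b c \<Longrightarrow> lt a c"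
    and step: "\<And>a. (\<And>a'. a' \<in> T \<Longrightarrow> lt a a' \<Longrightarrow> P a') \<Longrightarrow> P a"
  shows "P a"
proof (induction a rule: measure_induct_rule[where f = "\<lambda>a. card {c \<in> T. lt a c}"])
  case (less a)
  show ?case
  proof (rule step)
    fix a' assume a': "a' \<in> T" and aa': "lt a a'"
    have "{c \<in> T. lt a' c} \<subset> {c \<in> T. lt a c}" using a' aa' irrefl trans by blast
    then have "card {c \<in> T. lt a' c} < card {c \<in> T. lt a c}" using fin by (simp add: psubset_card_mono)
    then show "P a'" by (rule less)
  qed
qed

locale hall_setting = group G for G (structure) +
  fixes x :: "nat \<Rightarrow> 'a" and m :: nat and lt :: "fcomm \<Rightarrow> fcomm \<Rightarrow> bool"
  assumes xc: "\<And>i. i < m \<Longrightarrow> x i \<in> carrier G"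
    and ao: "admissible_order m lt"
    and gens: "generate G (x ` {..<m}) = carrier G"
begin

lemma lt_irrefl: "\<not> lt a a" using ao by (simp add: admissible_order_def)
lemma lt_trans: "lt a b \<Longrightarrow> lt b c \<Longrightarrow> lt a c" using ao unfolding admissible_order_def by blast
lemma lt_total: "lt a b \<or> a = b \<or> lt b a" using ao unfolding admissible_order_def by blast
lemma lt_wt: "wt a < wt b \<Longrightarrow> lt a b" using ao unfolding admissible_order_def by blast

lemma lt_wt_le: "lt a b \<Longrightarrow> wt a \<le> wt b"
  using lt_wt[of b a] lt_trans lt_irrefl by (meson not_le)

abbreviation ev :: "fcomm \<Rightarrow> 'a" where "ev c \<equiv> fc_eval G x c"

lemma basic_ev: "basic m lt c \<Longrightarrow> ev c \<in> lcs G (wt c - 1)"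
proof (induction rule: basic.induct)
  case (gen i) then show ?case using xc by (simp add: lcs.simps(1))
next
  case (br b a)
  have eq: "wt b - 1 + (wt a - 1) + 1 = wt (Br b a) - 1" using wt_pos[of a] wt_pos[of b] by simp
  show ?case unfolding eq[symmetric] fc_eval.simps by (rule comm_lcs[OF br.IH])
qed

lemma basic_ev_c: "basic m lt c \<Longrightarrow> ev c \<in> carrier G"
  using basic_ev lcs_carrier by blast

text \<open>S w is the set of values of basic commutators of weight w, and V w the subgroup they
  generate together with gamma_(w+1).  Hall's theorem says that V w = gamma_w.\<close>

definition S :: "nat \<Rightarrow> 'a set" where "S w = ev ` {c. basic m lt c \<and> wt c = w}"
definition V :: "nat \<Rightarrow> 'a set" where "V w = generate G (S w \<union> lcs G w)"

lemma SV_sub: "S w \<union> lcs G w \<subseteq> lcs G (w - 1)"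
  using basic_ev lcs_anti[of "w - 1" w] unfolding S_def by fastforce

lemma V_subgroup: "subgroup (V w) G"
  unfolding V_def by (rule generate_is_subgroup) (use SV_sub lcs_sub in blast)

lemma lcs_V_ge: "w \<le> l \<Longrightarrow> lcs G l \<subseteq> V w"
  using lcs_anti[of w l] generate.incl[of _ "S w \<union> lcs G w" G] unfolding V_def by blast

lemma basic_V: "basic m lt c \<Longrightarrow> ev c \<in> V (wt c)"
  unfolding V_def S_def by (rule generate.incl) blast

lemma gcomm_by_order:
  assumes H: "subgroup H G" and p: "basic m lt p" and q: "basic m lt q"
    and qp: "lt q p \<Longrightarrow> gcomm G (ev p) (ev q) \<in> H"
    and pq: "lt p q \<Longrightarrow> gcomm G (ev q) (ev p) \<in> H"
  shows "gcomm G (ev p) (ev q) \<in> H"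
proof -
  have pc: "ev p \<in> carrier G" and qc: "ev q \<in> carrier G" using p q basic_ev_c by auto
  consider "lt q p" | "p = q" | "lt p q" using lt_total by blast
  then show ?thesis
  proof cases
    case 1 then show ?thesis by (rule qp)
  next
    case 2 then show ?thesis using gcomm_self[OF pc] subgroup.one_closed[OF H] by simp
  next
    case 3
    then have "gcomm G (ev q) (ev p) \<in> H" by (rule pq)
    then show ?thesis using subgroup.m_inv_closed[OF H] gcomm_inv[OF qc pc] by metis
  qed
qed

lemma gcomm_V_left:
  assumes y: "y \<in> V s" and s: "1 \<le> s" and z: "z \<in> lcs G (t - 1)" and t: "1 \<le> t"
    and gens: "\<And>d. basic m lt d \<Longrightarrow> wt d = s \<Longrightarrow> gcomm G (ev d) z \<in> V (s + t)"
  shows "gcomm G y z \<in> V (s + t)"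
proof (rule gcomm_generate_left[OF z V_subgroup _ SV_sub _ y[unfolded V_def]])
  show "lcs G (2 * (s - 1) + (t - 1) + 2) \<subseteq> V (s + t)" by (rule lcs_V_ge) (use s t in simp)
  show "\<forall>e\<in>S s \<union> lcs G s. gcomm G e z \<in> V (s + t)"
  proof
    fix e assume "e \<in> S s \<union> lcs G s"
    then show "gcomm G e z \<in> V (s + t)"
    proof
      assume "e \<in> S s"
      then obtain d where "e = ev d" "basic m lt d" "wt d = s" unfolding S_def by blast
      then show ?thesis using gens by simp
    next
      assume "e \<in> lcs G s"
      then have "gcomm G e z \<in> lcs G (s + t)" by (rule comm_lcs_le[OF _ z]) (use t in simp)
      then show ?thesis using lcs_V_ge by blast
    qed
  qed
qed

text \<open>The collection step for a non-basic commutator [[b1,b2],a] with a < b2: by the Jacobi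
  identity it reduces to [[b1,a],b2] and [[b2,a],b1], and expanding [b1,a] and [b2,a] into
  basic commutators (which exceed a, being heavier) gives commutators of basic commutators
  above a, of total weight w.\<close>

lemma gcomm_V_nonbasic:
  assumes b: "basic m lt (Br b1 b2)" and a: "basic m lt a" and ab2: "lt a b2"
    and w: "wt (Br b1 b2) + wt a = w"
    and lower: "\<And>u v. basic m lt u \<Longrightarrow> basic m lt v \<Longrightarrow> wt u + wt v < w
                  \<Longrightarrow> gcomm G (ev u) (ev v) \<in> V (wt u + wt v)"
    and above: "\<And>p q. basic m lt p \<Longrightarrow> basic m lt q \<Longrightarrow> wt p + wt q = w \<Longrightarrow> lt a p \<Longrightarrow> lt a q
                  \<Longrightarrow> gcomm G (ev p) (ev q) \<in> V w"
  shows "gcomm G (ev (Br b1 b2)) (ev a) \<in> V w"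
proof -
  have parts: "basic m lt b1" "basic m lt b2" "lt b2 b1" using b by (auto elim: basic_BrE)
  have ab1: "lt a b1" using lt_trans[OF ab2 parts(3)] .
  have expand: "gcomm G (gcomm G (ev p) (ev a)) (ev q) \<in> V w"
    if p: "basic m lt p" and q: "basic m lt q" and aq: "lt a q" and wpq: "wt p + wt q + wt a = w"
    for p q
  proof -
    have pa: "gcomm G (ev p) (ev a) \<in> V (wt p + wt a)" using lower[OF p a] wpq wt_pos[of q] by simp
    have "gcomm G (gcomm G (ev p) (ev a)) (ev q) \<in> V (wt p + wt a + wt q)"
    proof (rule gcomm_V_left[OF pa _ basic_ev[OF q] wt_pos])
      show "1 \<le> wt p + wt a" using wt_pos[of a] by simp
      fix d assume d: "basic m lt d" "wt d = wt p + wt a"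
      have "lt a d" using lt_wt[of a d] d(2) wt_pos[of p] by simp
      then show "gcomm G (ev d) (ev q) \<in> V (wt p + wt a + wt q)"
        using above[OF d(1) q _ _ aq] d(2) wpq by (simp add: ac_simps)
    qed
    then show ?thesis using wpq by (simp add: ac_simps)
  qed
  have A: "gcomm G (gcomm G (ev b1) (ev a)) (ev b2) \<in> V w"
    by (rule expand[OF parts(1,2) ab2]) (use w in simp)
  have B: "gcomm G (gcomm G (ev b2) (ev a)) (ev b1) \<in> V w"
    by (rule expand[OF parts(2,1) ab1]) (use w in simp)
  have "lcs G (wt b1 - 1 + (wt b2 - 1) + (wt a - 1) + 3) \<subseteq> V w"
    by (rule lcs_V_ge) (use w wt_pos[of b1] wt_pos[of b2] wt_pos[of a] in simp)
  from jacobi[OF basic_ev[OF parts(1)] basic_ev[OF parts(2)] basic_ev[OF a] V_subgroup this A B]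
  show ?thesis by simp
qed

text \<open>P. Hall's collection process: the commutator of two basic commutators of total weight w
  lies in V w.  Induction on w, and for fixed w downward induction on the smaller argument.\<close>

lemma collection:
  assumes "basic m lt u" "basic m lt v" "wt u + wt v = w"
  shows "gcomm G (ev u) (ev v) \<in> V w"
  using assms
proof (induction w arbitrary: u v rule: less_induct)
  case (less w)
  have lower: "gcomm G (ev u') (ev v') \<in> V (wt u' + wt v')"
    if "basic m lt u'" "basic m lt v'" "wt u' + wt v' < w" for u' v'
    using less.IH[OF that(3,1,2)] by simp
  have desc: "\<forall>b. basic m lt b \<longrightarrow> basic m lt a \<longrightarrow> wt b + wt a = w \<longrightarrow> lt a b
                \<longrightarrow> gcomm G (ev b) (ev a) \<in> V w" for a
  proof (rule finite_down_induct[OF basic_finite[of m lt w] lt_irrefl lt_trans])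
    fix a assume IH: "\<And>a'. a' \<in> {c. basic m lt c \<and> wt c \<le> w} \<Longrightarrow> lt a a' \<Longrightarrow>
      \<forall>b. basic m lt b \<longrightarrow> basic m lt a' \<longrightarrow> wt b + wt a' = w \<longrightarrow> lt a' b \<longrightarrow> gcomm G (ev b) (ev a') \<in> V w"
    show "\<forall>b. basic m lt b \<longrightarrow> basic m lt a \<longrightarrow> wt b + wt a = w \<longrightarrow> lt a b
            \<longrightarrow> gcomm G (ev b) (ev a) \<in> V w"
    proof (intro allI impI)
      fix b assume b: "basic m lt b" and a: "basic m lt a" and wba: "wt b + wt a = w" and ab: "lt a b"
      show "gcomm G (ev b) (ev a) \<in> V w"
      proof (cases "basic m lt (Br b a)")
        case True
        have "ev (Br b a) \<in> V (wt (Br b a))" by (rule basic_V[OF True])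
        then show ?thesis using wba by simp
      next
        case False
        then have "\<not> (\<forall>b1 b2. b = Br b1 b2 \<longrightarrow> (lt b2 a \<or> b2 = a))"
          using basic.br[OF b a ab] by blast
        then obtain b1 b2 where bb: "b = Br b1 b2" and "\<not> (lt b2 a \<or> b2 = a)" by blast
        then have ab2: "lt a b2" using lt_total[of a b2] by blast
        have above: "gcomm G (ev p) (ev q) \<in> V w"
          if p: "basic m lt p" and q: "basic m lt q" and pq: "wt p + wt q = w"
            and ap: "lt a p" and aq: "lt a q" for p q
        proof (rule gcomm_by_order[OF V_subgroup p q])
          assume "lt q p"
          moreover have "q \<in> {c. basic m lt c \<and> wt c \<le> w}" using q pq by simp
          ultimately show "gcomm G (ev p) (ev q) \<in> V w" using IH[OF _ aq] p q pq by blast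
        next
          assume "lt p q"
          moreover have "p \<in> {c. basic m lt c \<and> wt c \<le> w}" using p pq by simp
          moreover have "wt q + wt p = w" using pq by simp
          ultimately show "gcomm G (ev q) (ev p) \<in> V w" using IH[OF _ ap] p q by blast
        qed
        have "basic m lt (Br b1 b2)" "wt (Br b1 b2) + wt a = w" using b wba bb by simp_all
        from gcomm_V_nonbasic[OF this(1) a ab2 this(2) lower above]
        show ?thesis unfolding bb .
      qed
    qed
  qed
  show ?case
  proof (rule gcomm_by_order[OF V_subgroup less.prems(1,2)])
    show "lt v u \<Longrightarrow> gcomm G (ev u) (ev v) \<in> V w" using desc less.prems by blast
    have "wt v + wt u = w" using less.prems(3) by simp
    then show "lt u v \<Longrightarrow> gcomm G (ev v) (ev u) \<in> V w" using desc less.prems by blast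
  qed
qed

text \<open>Consequently [c, y] lies in V (wt c + 1) for every basic c and every y in G, since
  commutation with c is multiplicative on the generators x_i = ev (Gen i) modulo gamma.\<close>

lemma gcomm_basic_carrier_V:
  assumes c: "basic m lt c" and y: "y \<in> carrier G"
  shows "gcomm G (ev c) y \<in> V (wt c + 1)"
proof (rule gcomm_generate_right[OF basic_ev[OF c] V_subgroup])
  show "lcs G (wt c - 1 + 2 * 0 + 2) \<subseteq> V (wt c + 1)" by (rule lcs_V_ge) (use wt_pos[of c] in simp)
  show "x ` {..<m} \<subseteq> lcs G 0" using xc by (auto simp: lcs.simps(1))
  show "\<forall>t\<in>x ` {..<m}. gcomm G (ev c) t \<in> V (wt c + 1)"
    using collection[OF c basic.gen] by auto
  show "y \<in> generate G (x ` {..<m})" using y gens by simp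
qed

lemma lcs_V: "lcs G j \<subseteq> V (Suc j)"
proof (induction j)
  case 0
  have "x ` {..<m} \<subseteq> V 1" using basic_V[OF basic.gen] by auto
  then have "generate G (x ` {..<m}) \<subseteq> V 1" by (rule generate_subgroup_incl[OF _ V_subgroup])
  then show ?case using gens by (simp add: lcs.simps(1))
next
  case (Suc j)
  have "gcomm G g y \<in> V (Suc (Suc j))" if g: "g \<in> lcs G j" and y: "y \<in> carrier G" for g y
  proof -
    have "gcomm G g y \<in> V (Suc j + 1)"
    proof (rule gcomm_V_left)
      show "g \<in> V (Suc j)" using Suc.IH g by blast
      show "y \<in> lcs G (1 - 1)" using y by (simp add: lcs.simps(1))
      show "gcomm G (ev d) y \<in> V (Suc j + 1)" if "basic m lt d" "wt d = Suc j" for d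
        using gcomm_basic_carrier_V[OF that(1) y] that(2) by simp
    qed simp_all
    then show ?thesis by simp
  qed
  then show ?case unfolding lcs.simps(2) comm_subgroup_def
    by (intro generate_subgroup_incl[OF _ V_subgroup]) blast
qed

definition basic_range :: "nat \<Rightarrow> nat \<Rightarrow> 'a set" where
  "basic_range i j = ev ` {c. basic m lt c \<and> i \<le> wt c \<and> wt c \<le> j}"

lemma basic_range_sub: "1 \<le> i \<Longrightarrow> basic_range i j \<subseteq> lcs G (i - 1)"
proof
  fix y assume i: "1 \<le> i" and "y \<in> basic_range i j"
  then obtain c where c: "y = ev c" "basic m lt c" "i \<le> wt c" unfolding basic_range_def by blast
  have "lcs G (wt c - 1) \<subseteq> lcs G (i - 1)" by (rule lcs_anti) (use c(3) in simp)
  then show "y \<in> lcs G (i - 1)" using basic_ev[OF c(2)] c(1) by blast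
qed

lemma lcs_basic_range: "lcs G i \<subseteq> generate G (basic_range (Suc i) (i + d) \<union> lcs G (i + d))"
proof (induction d)
  case 0
  show ?case using generate.incl[of _ "basic_range (Suc i) (i + 0) \<union> lcs G (i + 0)" G] by auto
next
  case (Suc d)
  let ?D = "basic_range (Suc i) (i + Suc d) \<union> lcs G (i + Suc d)"
  have sgt: "subgroup (generate G ?D) G"
    by (rule generate_is_subgroup) (use basic_range_sub[of "Suc i"] lcs_sub in fastforce)
  have "basic_range (Suc i) (i + d) \<subseteq> basic_range (Suc i) (i + Suc d)"
    unfolding basic_range_def by auto
  then have s1: "basic_range (Suc i) (i + d) \<subseteq> generate G ?D"
    using generate.incl[of _ ?D G] by blast
  have "S (Suc (i + d)) \<subseteq> basic_range (Suc i) (i + Suc d)" unfolding S_def basic_range_def by auto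
  then have "V (Suc (i + d)) \<subseteq> generate G ?D" unfolding V_def by (intro mono_generate) auto
  then have s2: "lcs G (i + d) \<subseteq> generate G ?D" using lcs_V[of "i + d"] by blast
  have "generate G (basic_range (Suc i) (i + d) \<union> lcs G (i + d)) \<subseteq> generate G ?D"
    by (rule generate_subgroup_incl[OF _ sgt]) (use s1 s2 in blast)
  then show ?case using Suc by blast
qed

end

section \<open>The commutator subgroup [gamma_(k+n+1), gamma_(k+1)] modulo gamma_(2k+2n+2)\<close>

definition basic_pairs :: "nat \<Rightarrow> (fcomm \<Rightarrow> fcomm \<Rightarrow> bool) \<Rightarrow> nat \<Rightarrow> nat \<Rightarrow> fcomm set" where
  "basic_pairs m lt k n = {Br b a | b a. basic m lt b \<and> basic m lt a \<and> lt a b \<and>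
     wt b \<ge> k + n + 1 \<and> wt a \<ge> k + 1 \<and> wt b + wt a \<le> 2 * k + 2 * n + 1}"

context hall_setting begin

lemma basic_pairs_sub_comm: "ev ` basic_pairs m lt k n \<subseteq> comm_subgroup G (lcs G (k + n)) (lcs G k)"
proof
  fix y assume "y \<in> ev ` basic_pairs m lt k n"
  then obtain b a where ba: "y = ev (Br b a)" "basic m lt b" "basic m lt a"
      "k + n + 1 \<le> wt b" "k + 1 \<le> wt a"
    unfolding basic_pairs_def by blast
  have "lcs G (wt b - 1) \<subseteq> lcs G (k + n)" "lcs G (wt a - 1) \<subseteq> lcs G k"
    by (rule lcs_anti, use ba in simp)+
  then have "ev b \<in> lcs G (k + n)" "ev a \<in> lcs G k" using basic_ev[OF ba(2)] basic_ev[OF ba(3)] by blast+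
  then show "y \<in> comm_subgroup G (lcs G (k + n)) (lcs G k)" using comm_subgroup_incl ba(1) by simp
qed

text \<open>Write t as
  a product of basic commutators d with k+1 \<le> wt d \<le> 2k+2n+1-wt c modulo gamma_(2k+2n+2-wt c);
  each [c,d] is (the inverse of) a basic pair.  The correction terms lie in
  gamma_(wt c + 2k + 2), which is inside gamma_(2k+2n+2) since wt c \<ge> k+n+1 \<ge> 2n.\<close>

lemma gcomm_basic_mem:
  assumes R: "subgroup R G" "ev ` basic_pairs m lt k n \<subseteq> R" "lcs G (2*k + 2*n + 1) \<subseteq> R"
    and kn: "k \<ge> n - 1"
    and c: "basic m lt c" "k + n + 1 \<le> wt c" "wt c \<le> k + 2 * n"
    and t: "t \<in> lcs G k"
  shows "gcomm G (ev c) t \<in> R"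
proof -
  define e where "e = k + (k + 2*n + 1 - wt c)"
  have N_ge: "lcs G l \<subseteq> R" if "2*k + 2*n + 1 \<le> l" for l using lcs_anti[OF that] R(3) by blast
  have "t \<in> generate G (basic_range (Suc k) e \<union> lcs G e)"
    using lcs_basic_range[of k "k + 2*n + 1 - wt c"] t unfolding e_def by blast
  then show ?thesis
  proof (rule gcomm_generate_right[OF basic_ev[OF c(1)] R(1), rotated -1])
    show "lcs G (wt c - 1 + 2 * k + 2) \<subseteq> R" by (rule N_ge) (use c(2) kn in simp)
    show "basic_range (Suc k) e \<union> lcs G e \<subseteq> lcs G k"
      using basic_range_sub[of "Suc k"] lcs_anti[of k e] unfolding e_def by auto
    show "\<forall>t\<in>basic_range (Suc k) e \<union> lcs G e. gcomm G (ev c) t \<in> R"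
    proof
      fix t assume "t \<in> basic_range (Suc k) e \<union> lcs G e"
      then show "gcomm G (ev c) t \<in> R"
      proof
        assume "t \<in> basic_range (Suc k) e"
        then obtain d where d: "t = ev d" "basic m lt d" "Suc k \<le> wt d" "wt d \<le> e"
          unfolding basic_range_def by blast
        have "gcomm G (ev c) (ev d) \<in> R"
        proof (rule gcomm_by_order[OF R(1) c(1) d(2)])
          assume "lt d c"
          then have "Br c d \<in> basic_pairs m lt k n" unfolding basic_pairs_def using c d e_def by auto
          then show "gcomm G (ev c) (ev d) \<in> R" using R(2) by force
        next
          assume "lt c d"
          then have "Br d c \<in> basic_pairs m lt k n"
            unfolding basic_pairs_def using c d e_def lt_wt_le[of c d] by auto
          then show "gcomm G (ev d) (ev c) \<in> R" using R(2) by force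
        qed
        then show ?thesis using d(1) by simp
      next
        assume "t \<in> lcs G e"
        then have "gcomm G (ev c) t \<in> lcs G (2*k + 2*n + 1)"
          by (rule comm_lcs_le[OF basic_ev[OF c(1)]]) (use c wt_pos[of c] in \<open>simp add: e_def\<close>)
        then show ?thesis using R(3) by blast
      qed
    qed
  qed
qed

text \<open>Hence [gamma_(k+n+1), gamma_(k+1)] lies in every such R: expand the first argument of a
  generating commutator into basic commutators of weights k+n+1, ..., k+2n modulo
  gamma_(k+2n+1), whose commutators with gamma_(k+1) already lie in gamma_(2k+2n+2).\<close>

lemma comm_subgroup_mem:
  assumes R: "subgroup R G" "ev ` basic_pairs m lt k n \<subseteq> R" "lcs G (2*k + 2*n + 1) \<subseteq> R"
    and kn: "k \<ge> n - 1"
  shows "comm_subgroup G (lcs G (k + n)) (lcs G k) \<subseteq> R"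
  unfolding comm_subgroup_def
proof (rule generate_subgroup_incl[OF _ R(1)], safe)
  fix g h assume g: "g \<in> lcs G (k + n)" and h: "h \<in> lcs G k"
  let ?D = "basic_range (Suc (k + n)) (k + n + n) \<union> lcs G (k + n + n)"
  have "g \<in> generate G ?D" using lcs_basic_range[of "k + n" n] g by blast
  then show "gcomm G g h \<in> R"
  proof (rule gcomm_generate_left[OF h R(1), rotated -1])
    show "lcs G (2 * (k + n) + k + 2) \<subseteq> R"
      using lcs_anti[of "2*k + 2*n + 1" "2 * (k + n) + k + 2"] R(3) by simp
    show "?D \<subseteq> lcs G (k + n)"
      using basic_range_sub[of "Suc (k + n)"] lcs_anti[of "k + n" "k + n + n"] by auto
    show "\<forall>e\<in>?D. gcomm G e h \<in> R"
    proof
      fix e assume "e \<in> ?D"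
      then show "gcomm G e h \<in> R"
      proof
        assume "e \<in> basic_range (Suc (k + n)) (k + n + n)"
        then obtain c where "e = ev c" "basic m lt c" "Suc (k + n) \<le> wt c" "wt c \<le> k + n + n"
          unfolding basic_range_def by blast
        then show ?thesis using gcomm_basic_mem[OF R kn _ _ _ h] by simp
      next
        assume "e \<in> lcs G (k + n + n)"
        then have "gcomm G e h \<in> lcs G (2*k + 2*n + 1)" by (rule comm_lcs_le[OF _ h]) simp
        then show ?thesis using R(3) by blast
      qed
    qed
  qed
qed

end

theorem lemma2p5:
  fixes F :: "('g, 'b) monoid_scheme" and x :: "nat \<Rightarrow> 'g"
    and m n k :: nat and lt :: "fcomm \<Rightarrow> fcomm \<Rightarrow> bool"
  assumes "free_group_on F x m"
    and "admissible_order m lt"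
    and "n \<ge> 1" and "k \<ge> 1" and "k \<ge> n - 1"
  defines "W \<equiv> {Br b a | b a. basic m lt b \<and> basic m lt a \<and> lt a b \<and>
                 wt b \<ge> k + n + 1 \<and> wt a \<ge> k + 1 \<and> wt b + wt a \<le> 2 * k + 2 * n + 1}"
  shows "comm_subgroup F (gamma F (k + n + 1)) (gamma F (k + 1)) <#>\<^bsub>F\<^esub> gamma F (2*k + 2*n + 2)
       = generate F (fc_eval F x ` W) <#>\<^bsub>F\<^esub> gamma F (2*k + 2*n + 2)"
proof -
  have grp: "group F" and xs: "x ` {..<m} \<subseteq> carrier F" and gen: "generate F (x ` {..<m}) = carrier F"
    using assms(1) unfolding free_group_on_def by auto
  interpret hall_setting F x m lt
    by (intro hall_setting.intro grp hall_setting_axioms.intro) (use xs gen assms(2) in auto)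
  let ?N = "lcs F (2*k + 2*n + 1)" and ?E = "ev ` W"
  let ?C = "comm_subgroup F (lcs F (k + n)) (lcs F k)" and ?R = "generate F (?E \<union> ?N)"
  have W: "W = basic_pairs m lt k n" unfolding W_def basic_pairs_def ..
  have EC: "?E \<subseteq> ?C" unfolding W by (rule basic_pairs_sub_comm)
  have Csg: "subgroup ?C F" by (rule comm_subgroup_subgroup[OF lcs_sub lcs_sub])
  have Ec: "?E \<subseteq> carrier F" using EC subgroup.subset[OF Csg] by blast
  have Rsg: "subgroup ?R F" by (rule generate_is_subgroup) (use Ec lcs_sub in blast)
  \<comment> \<open>both products equal R = <W \<union> N>, the subgroup generated by W and N\<close>
  have CR: "?C \<subseteq> ?R"
    by (rule comm_subgroup_mem[OF Rsg _ _ assms(5)]) (use generate.incl[of _ "?E \<union> ?N" F] W in blast)+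
  have "?C <#>\<^bsub>F\<^esub> ?N = ?R"
    by (rule set_mult_normal_eq_generate[OF Csg lcs_normal EC CR])
  moreover have "generate F ?E <#>\<^bsub>F\<^esub> ?N = ?R"
    by (rule set_mult_normal_eq_generate[OF generate_is_subgroup[OF Ec] lcs_normal])
       (use generate.incl[of _ ?E F] mono_generate[of ?E "?E \<union> ?N"] in blast)+
  ultimately show ?thesis unfolding gamma_def by simp
qed

end
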